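(* Let $T$ be an infinite rooted ordered tree with root $\varnothing$, let $\lambda\in(1,\infty)$ and let $(Y_n)_{n\in\mathbb N}$ be the $\lambda$-biased random walk on $T$ (with arbitrary initial distribution). Assume $Y$ is recurrent. Then for all $\ell,n_1,n_2\in\mathbb N$ with $n_1<n_2$, $$\mathbf P\Big(|Y_{n_1}|+|Y_{n_2}|-2\min_{n_1\le n\le n_2}|Y_n|\ge2\ell+d_{\mathtt{gr}}(Y_{n_1},Y_{n_2})\Big)\le(n_2-n_1)\frac{\lambda-1}{\lambda^\ell-1}.$$
   Context: $\lambda$-biased random walk: from $x\ne\varnothing$ with $k_x(T)$ children, go to the parent w.p. $\lambda/(\lambda+k_x(T))$ and to each child w.p. $1/(\lambda+k_x(T))$; from $\varnothing$ go to each child w.p. $1/k_\varnothing(T)$. $|x|$ is the height of $x$ (graph distance to $\varnothing$), $d_{\mathtt{gr}}$ the graph distance on $T$. *)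

theory Defs
  imports "HOL-Probability.Probability"
begin

text \<open>Rooted ordered (Ulam--Harris) trees: vertices are lists of naturals, the root is [],
  the children of x are x@[0], ..., x@[k-1].  Finite number of children per vertex.\<close>

definition ordered_tree :: "nat list set \<Rightarrow> bool" where
  "ordered_tree T \<longleftrightarrow>
     [] \<in> T \<and>
     (\<forall>x i. x @ [i] \<in> T \<longrightarrow> x \<in> T) \<and>
     (\<forall>x i j. x @ [i] \<in> T \<and> j < i \<longrightarrow> x @ [j] \<in> T) \<and>
     (\<forall>x\<in>T. finite {i. x @ [i] \<in> T})"

definition num_children :: "nat list set \<Rightarrow> nat list \<Rightarrow> nat" where
  "num_children T x = card {i. x @ [i] \<in> T}"

definition height :: "nat list \<Rightarrow> nat" where
  "height x = length x"

definition tree_adj :: "nat list set \<Rightarrow> nat list \<Rightarrow> nat list \<Rightarrow> bool" where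
  "tree_adj T x y \<longleftrightarrow> x \<in> T \<and> y \<in> T \<and> (\<exists>i. y = x @ [i] \<or> x = y @ [i])"

definition tree_path :: "nat list set \<Rightarrow> nat list list \<Rightarrow> bool" where
  "tree_path T ps \<longleftrightarrow> ps \<noteq> [] \<and> set ps \<subseteq> T \<and>
     (\<forall>k. Suc k < length ps \<longrightarrow> tree_adj T (ps ! k) (ps ! Suc k))"

definition d_gr :: "nat list set \<Rightarrow> nat list \<Rightarrow> nat list \<Rightarrow> nat" where
  "d_gr T x y = (LEAST n. \<exists>ps. tree_path T ps \<and> hd ps = x \<and> last ps = y \<and> length ps = Suc n)"

definition lbrw_step :: "nat list set \<Rightarrow> real \<Rightarrow> nat list \<Rightarrow> nat list pmf" where
  "lbrw_step T lam x =
     (if x = [] then pmf_of_set {[i] | i. i < num_children T []}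
      else bind_pmf (bernoulli_pmf (lam / (lam + real (num_children T x))))
             (\<lambda>b. if b then return_pmf (butlast x)
                  else pmf_of_set {x @ [i] | i. i < num_children T x}))"

text \<open>Law of the trajectory (Y_0, ..., Y_N) with initial distribution mu, as a list of length N+1.\<close>

primrec lbrw_path :: "nat list set \<Rightarrow> real \<Rightarrow> nat list pmf \<Rightarrow> nat \<Rightarrow> nat list list pmf" where
  "lbrw_path T lam mu 0 = map_pmf (\<lambda>x. [x]) mu"
| "lbrw_path T lam mu (Suc n) =
     bind_pmf (lbrw_path T lam mu n) (\<lambda>ys. map_pmf (\<lambda>y. ys @ [y]) (lbrw_step T lam (last ys)))"

definition lbrw_recurrent :: "nat list set \<Rightarrow> real \<Rightarrow> bool" where
  "lbrw_recurrent T lam \<longleftrightarrow>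
     (\<lambda>n. measure_pmf.prob (lbrw_path T lam (return_pmf []) n)
            {ys. \<exists>k\<in>{1..n}. ys ! k = []}) \<longlonglongrightarrow> 1"

end

theory Submission
  imports Defs "HOL-Library.Sublist"
begin

text \<open>Suppose the event holds, let h be the minimal height of the walk on [n1, n2] and let
  x \<and> y be the last common ancestor of x = Y n1 and y = Y n2. Since the graph distance
  dominates |x| + |y| - 2|x \<and> y|, we get |x \<and> y| \<ge> h + l. So after the last time m at
  which the walk is at height h, it still has to climb from Y m to the ancestor z of x at
  height |Y m| + l without returning to height |Y m|. Along the ray from Y m to z the walk
  is \<lambda>-biased backwards, so by the Markov property at time m such a climb has probability
  at most 1 / (1 + \<lambda> + ... + \<lambda>^(l-1)) = (\<lambda> - 1) / (\<lambda>^l - 1); formally this is a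
  superharmonic potential argument. A union bound over m gives the factor n2 - n1.\<close>

section \<open>Markov chains given by a transition kernel\<close>

lemma measure_bind_pmf:
  "measure_pmf.prob (bind_pmf M N) X = measure_pmf.expectation M (\<lambda>x. measure_pmf.prob (N x) X)"
proof -
  have "ennreal (measure_pmf.prob (bind_pmf M N) X) = (\<integral>\<^sup>+x. emeasure (N x) X \<partial>M)"
    by (simp add: measure_pmf.emeasure_eq_measure[symmetric])
  also have "\<dots> = (\<integral>\<^sup>+x. ennreal (measure_pmf.prob (N x) X) \<partial>M)"
    by (simp add: measure_pmf.emeasure_eq_measure)
  also have "\<dots> = ennreal (measure_pmf.expectation M (\<lambda>x. measure_pmf.prob (N x) X))"
    by (intro nn_integral_eq_integral measure_pmf.integrable_const_bound[where B=1]) auto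
  finally show ?thesis by (simp add: ennreal_inj)
qed

lemma measure_bind_pmf_le:
  assumes "\<And>x. x \<in> set_pmf M \<Longrightarrow> measure_pmf.prob (N x) X \<le> c"
  shows "measure_pmf.prob (bind_pmf M N) X \<le> c"
proof -
  have "measure_pmf.prob (bind_pmf M N) X \<le> measure_pmf.expectation M (\<lambda>x. c)"
    unfolding measure_bind_pmf
    by (rule integral_mono_AE)
      (auto intro!: measure_pmf.integrable_const_bound[where B=1] AE_pmfI assms)
  then show ?thesis by simp
qed

lemma measure_pmf_mono_on_set_pmf:
  assumes "\<And>x. x \<in> A \<Longrightarrow> x \<in> set_pmf M \<Longrightarrow> x \<in> B"
  shows "measure_pmf.prob M A \<le> measure_pmf.prob M B"
proof -
  have "measure_pmf.prob M A = measure_pmf.prob M (A \<inter> set_pmf M)"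
    by (simp add: measure_Int_set_pmf)
  also have "\<dots> \<le> measure_pmf.prob M B"
    by (rule measure_pmf.finite_measure_mono) (use assms in auto)
  finally show ?thesis .
qed

lemma integrable_pmf_bounded:
  fixes f :: "'a \<Rightarrow> real"
  assumes "\<And>x. \<bar>f x\<bar> \<le> B"
  shows "integrable (measure_pmf M) f"
  by (rule measure_pmf.integrable_const_bound[where B=B]) (use assms in auto)

lemma integral_bind_pmf:
  fixes f :: "'a \<Rightarrow> real"
  assumes "\<And>x. 0 \<le> f x" "\<And>x. f x \<le> B"
  shows "measure_pmf.expectation (bind_pmf M N) f =
    measure_pmf.expectation M (\<lambda>x. measure_pmf.expectation (N x) f)"
proof -
  have int: "integrable (measure_pmf P) f" for P
    by (rule integrable_pmf_bounded[where B=B]) (use assms in auto)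
  have nonneg: "0 \<le> measure_pmf.expectation P f" for P
    by (rule Bochner_Integration.integral_nonneg) (use assms in auto)
  have "measure_pmf.expectation P f \<le> measure_pmf.expectation P (\<lambda>_. B)" for P
    by (rule integral_mono[OF int]) (use assms in auto)
  then have "\<bar>measure_pmf.expectation P f\<bar> \<le> B" for P
    using nonneg by simp
  then have int_outer: "integrable (measure_pmf M) (\<lambda>x. measure_pmf.expectation (N x) f)"
    by (rule integrable_pmf_bounded)
  have "ennreal (measure_pmf.expectation (bind_pmf M N) f) = (\<integral>\<^sup>+y. ennreal (f y) \<partial>bind_pmf M N)"
    by (rule nn_integral_eq_integral[OF int, symmetric]) (use assms in auto)
  also have "\<dots> = (\<integral>\<^sup>+x. ennreal (measure_pmf.expectation (N x) f) \<partial>M)"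
    by (simp, intro nn_integral_cong nn_integral_eq_integral[OF int]) (use assms in auto)
  also have "\<dots> = ennreal (measure_pmf.expectation M (\<lambda>x. measure_pmf.expectation (N x) f))"
    by (rule nn_integral_eq_integral[OF int_outer]) (use nonneg in auto)
  finally show ?thesis using nonneg by (simp add: ennreal_inj)
qed

lemma integral_pmf_mono:
  fixes f g :: "'a \<Rightarrow> real"
  assumes "\<And>x. x \<in> set_pmf M \<Longrightarrow> f x \<le> g x" "\<And>x. \<bar>f x\<bar> \<le> B" "\<And>x. \<bar>g x\<bar> \<le> C"
  shows "measure_pmf.expectation M f \<le> measure_pmf.expectation M g"
  by (rule integral_mono_AE) (auto intro: integrable_pmf_bounded assms AE_pmfI)

lemma last_conv_nth_Suc: "length ys = Suc m \<Longrightarrow> last ys = ys ! m"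
  by (cases ys rule: rev_cases) auto

primrec chain_path :: "('a \<Rightarrow> 'a pmf) \<Rightarrow> 'a pmf \<Rightarrow> nat \<Rightarrow> 'a list pmf" where
  "chain_path K mu 0 = map_pmf (\<lambda>x. [x]) mu"
| "chain_path K mu (Suc n) =
     bind_pmf (chain_path K mu n) (\<lambda>ys. map_pmf (\<lambda>y. ys @ [y]) (K (last ys)))"

lemma lbrw_path_eq_chain_path: "lbrw_path T lam mu n = chain_path (lbrw_step T lam) mu n"
  by (induction n) simp_all

lemma set_pmf_chain_path:
  assumes "ys \<in> set_pmf (chain_path K mu n)"
  shows "length ys = Suc n" "ys ! 0 \<in> set_pmf mu" "\<And>i. i < n \<Longrightarrow> ys ! Suc i \<in> set_pmf (K (ys ! i))"
proof -
  have "length ys = Suc n \<and> ys ! 0 \<in> set_pmf mu \<and> (\<forall>i<n. ys ! Suc i \<in> set_pmf (K (ys ! i)))"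
    using assms
  proof (induction n arbitrary: ys)
    case (Suc n)
    then obtain xs y where xs: "xs \<in> set_pmf (chain_path K mu n)"
      and y: "y \<in> set_pmf (K (last xs))" and ys: "ys = xs @ [y]"
      by auto
    have IH: "length xs = Suc n" "xs ! 0 \<in> set_pmf mu" "\<forall>i<n. xs ! Suc i \<in> set_pmf (K (xs ! i))"
      using Suc.IH[OF xs] by auto
    have "last xs = xs ! n"
      using IH(1) by (rule last_conv_nth_Suc)
    then have "ys ! Suc i \<in> set_pmf (K (ys ! i))" if "i < Suc n" for i
      using that IH y unfolding ys by (cases "i < n") (auto simp: nth_append less_Suc_eq)
    then show ?case using IH ys by (simp add: nth_append)
  qed auto
  then show "length ys = Suc n" "ys ! 0 \<in> set_pmf mu" "\<And>i. i < n \<Longrightarrow> ys ! Suc i \<in> set_pmf (K (ys ! i))"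
    by auto
qed

lemma chain_path_add:
  "chain_path K mu (m + k) = bind_pmf (chain_path K mu m)
     (\<lambda>ys. map_pmf (\<lambda>zs. ys @ tl zs) (chain_path K (return_pmf (last ys)) k))"
proof (induction k)
  case 0
  then show ?case by (simp add: map_pmf_def bind_return_pmf bind_return_pmf')
next
  case (Suc k)
  have "bind_pmf (map_pmf (\<lambda>zs. ys @ tl zs) (chain_path K (return_pmf (last ys)) k))
          (\<lambda>xs. map_pmf (\<lambda>y. xs @ [y]) (K (last xs))) =
        map_pmf (\<lambda>zs. ys @ tl zs) (chain_path K (return_pmf (last ys)) (Suc k))"
    if ys: "ys \<in> set_pmf (chain_path K mu m)" for ys
    unfolding bind_map_pmf chain_path.simps map_bind_pmf
  proof (rule bind_pmf_cong[OF refl])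
    fix zs assume "zs \<in> set_pmf (chain_path K (return_pmf (last ys)) k)"
    from set_pmf_chain_path[OF this] obtain z zs' where zs: "zs = z # zs'" "z = last ys"
      by (cases zs) auto
    have "ys \<noteq> []"
      using set_pmf_chain_path(1)[OF ys] by auto
    then have "last (ys @ tl zs) = last zs"
      using zs by (cases zs') auto
    then show "map_pmf (\<lambda>y. (ys @ tl zs) @ [y]) (K (last (ys @ tl zs))) =
        map_pmf (\<lambda>zs. ys @ tl zs) (map_pmf (\<lambda>y. zs @ [y]) (K (last zs)))"
      using zs by (simp add: pmf.map_comp o_def)
  qed
  then show ?case
    by (simp add: Suc bind_assoc_pmf cong: bind_pmf_cong)
qed

lemma chain_path_Suc_first:
  "chain_path K (return_pmf x) (Suc k) =
     bind_pmf (K x) (\<lambda>y. map_pmf ((#) x) (chain_path K (return_pmf y) k))"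
proof -
  have "chain_path K (return_pmf x) (1 + k) = bind_pmf (chain_path K (return_pmf x) 1)
     (\<lambda>ys. map_pmf (\<lambda>zs. ys @ tl zs) (chain_path K (return_pmf (last ys)) k))"
    by (rule chain_path_add)
  also have "\<dots> = bind_pmf (K x)
     (\<lambda>y. map_pmf (\<lambda>zs. [x, y] @ tl zs) (chain_path K (return_pmf y) k))"
    by (simp add: bind_return_pmf bind_map_pmf map_pmf_def[symmetric])
  also have "\<dots> = bind_pmf (K x) (\<lambda>y. map_pmf ((#) x) (chain_path K (return_pmf y) k))"
  proof (intro bind_pmf_cong map_pmf_cong refl)
    fix y zs assume "zs \<in> set_pmf (chain_path K (return_pmf y) k)"
    from set_pmf_chain_path[OF this] show "[x, y] @ tl zs = x # zs"
      by (cases zs) auto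
  qed
  finally show ?thesis by simp
qed

lemma measure_chain_path_Suc_first:
  "measure_pmf.prob (chain_path K (return_pmf x) (Suc k)) A =
     measure_pmf.expectation (K x)
       (\<lambda>y. measure_pmf.prob (chain_path K (return_pmf y) k) {zs. x # zs \<in> A})"
  unfolding chain_path_Suc_first measure_bind_pmf by (simp add: vimage_def)

lemma measure_chain_path_add_le:
  assumes "\<And>ys. ys \<in> set_pmf (chain_path K mu m) \<Longrightarrow>
    measure_pmf.prob (chain_path K (return_pmf (last ys)) k) {zs. ys @ tl zs \<in> A} \<le> c"
  shows "measure_pmf.prob (chain_path K mu (m + k)) A \<le> c"
  unfolding chain_path_add
  by (rule measure_bind_pmf_le) (use assms in \<open>simp add: vimage_def\<close>)

definition hits_within :: "'a set \<Rightarrow> 'a \<Rightarrow> nat \<Rightarrow> 'a list set" where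
  "hits_within D z k = {zs. \<exists>t\<le>k. zs ! t = z \<and> (\<forall>s\<le>t. zs ! s \<in> D)}"

lemma Cons_in_hits_within_Suc:
  assumes "x \<noteq> z"
  shows "x # zs \<in> hits_within D z (Suc k) \<longleftrightarrow> x \<in> D \<and> zs \<in> hits_within D z k"
proof
  assume "x # zs \<in> hits_within D z (Suc k)"
  then obtain t where t: "t \<le> Suc k" "(x # zs) ! t = z" "\<forall>s\<le>t. (x # zs) ! s \<in> D"
    unfolding hits_within_def by blast
  then obtain t' where "t = Suc t'"
    using assms by (cases t) auto
  then show "x \<in> D \<and> zs \<in> hits_within D z k"
    using t unfolding hits_within_def by (auto intro!: exI[of _ t'] dest: spec[of _ "Suc _"])
next
  assume "x \<in> D \<and> zs \<in> hits_within D z k"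
  then obtain t where "x \<in> D" "t \<le> k" "zs ! t = z" "\<forall>s\<le>t. zs ! s \<in> D"
    unfolding hits_within_def by blast
  then show "x # zs \<in> hits_within D z (Suc k)"
    unfolding hits_within_def by (auto intro!: exI[of _ "Suc t"] simp: nth_Cons split: nat.split)
qed

lemma Cons_in_hits_after_start:
  "x # zs \<in> {zs. \<exists>t\<in>{1..Suc k}. zs ! t = z \<and> (\<forall>s\<in>{1..t}. zs ! s \<in> D)} \<longleftrightarrow>
    zs \<in> hits_within D z k"
proof
  assume "x # zs \<in> {zs. \<exists>t\<in>{1..Suc k}. zs ! t = z \<and> (\<forall>s\<in>{1..t}. zs ! s \<in> D)}"
  then obtain t where t: "t \<in> {1..Suc k}" "(x # zs) ! t = z" "\<forall>s\<in>{1..t}. (x # zs) ! s \<in> D"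
    by blast
  then obtain t' where "t = Suc t'"
    by (cases t) auto
  then show "zs \<in> hits_within D z k"
    using t unfolding hits_within_def by (auto intro!: exI[of _ t'] dest: bspec[of _ _ "Suc _"])
next
  assume "zs \<in> hits_within D z k"
  then obtain t where "t \<le> k" "zs ! t = z" "\<forall>s\<le>t. zs ! s \<in> D"
    unfolding hits_within_def by blast
  then show "x # zs \<in> {zs. \<exists>t\<in>{1..Suc k}. zs ! t = z \<and> (\<forall>s\<in>{1..t}. zs ! s \<in> D)}"
    by (auto intro!: bexI[of _ "Suc t"] simp: nth_Cons split: nat.split)
qed

lemma measure_chain_path_hits_within_le_superharmonic:
  fixes f :: "'a \<Rightarrow> real"
  assumes f_nonneg: "\<And>y. 0 \<le> f y" and f_bounded: "\<And>y. f y \<le> B" and target: "1 \<le> f z"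
    and superharmonic: "\<And>y. y \<in> D \<Longrightarrow> y \<noteq> z \<Longrightarrow> measure_pmf.expectation (K y) f \<le> f y"
  shows "measure_pmf.prob (chain_path K (return_pmf x) k) (hits_within D z k) \<le> f x"
proof (induction k arbitrary: x)
  case 0
  show ?case
    using target f_nonneg[of x] by (cases "x = z") (auto simp: hits_within_def indicator_def)
next
  case (Suc k)
  show ?case
  proof (cases "x = z")
    case True
    then show ?thesis
      using target measure_pmf.prob_le_1 order_trans by blast
  next
    case False
    have "measure_pmf.prob (chain_path K (return_pmf x) (Suc k)) (hits_within D z (Suc k)) =
        measure_pmf.expectation (K x)
          (\<lambda>y. measure_pmf.prob (chain_path K (return_pmf y) k) (if x \<in> D then hits_within D z k else {}))"
      unfolding measure_chain_path_Suc_first Cons_in_hits_within_Suc[OF False] by (simp cong: if_cong)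
    also have "\<dots> \<le> (if x \<in> D then measure_pmf.expectation (K x) f else 0)"
      using Suc.IH f_nonneg f_bounded
      by (auto intro!: integral_pmf_mono[where B=1 and C=B] simp: abs_of_nonneg)
    also have "\<dots> \<le> f x"
      using superharmonic[OF _ False] f_nonneg by simp
    finally show ?thesis .
  qed
qed

lemma measure_chain_path_hit_after_step_le:
  fixes f :: "'a \<Rightarrow> real"
  assumes f_nonneg: "\<And>y. 0 \<le> f y" and f_bounded: "\<And>y. f y \<le> B" and target: "1 \<le> f z"
    and superharmonic: "\<And>y. y \<in> D \<Longrightarrow> y \<noteq> z \<Longrightarrow> measure_pmf.expectation (K y) f \<le> f y"
  shows "measure_pmf.prob (chain_path K (return_pmf x) n)
           {zs. \<exists>t\<in>{1..n}. zs ! t = z \<and> (\<forall>s\<in>{1..t}. zs ! s \<in> D)}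
         \<le> measure_pmf.expectation (K x) f"
proof (cases n)
  case 0
  then show ?thesis
    using f_nonneg by (simp add: Bochner_Integration.integral_nonneg)
next
  case (Suc k)
  show ?thesis
    unfolding Suc measure_chain_path_Suc_first Cons_in_hits_after_start
  proof (rule integral_pmf_mono)
    show "measure_pmf.prob (chain_path K (return_pmf y) k) {zs. zs \<in> hits_within D z k} \<le> f y" for y
      using measure_chain_path_hits_within_le_superharmonic[OF assms] by simp
  qed (use f_nonneg f_bounded in \<open>auto simp: abs_of_nonneg\<close>)
qed

section \<open>The \<open>\<lambda>\<close>-biased random walk on an ordered tree\<close>

lemma ordered_tree_prefix_closed:
  assumes "ordered_tree T" "x @ y \<in> T"
  shows "x \<in> T"
  using assms(2)
proof (induction y rule: rev_induct)
  case (snoc a y)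
  then show ?case
    using assms(1) unfolding ordered_tree_def by (metis append_assoc)
qed simp

lemma ordered_tree_child_in_tree:
  assumes "ordered_tree T" "i < num_children T x"
  shows "x @ [i] \<in> T"
proof (rule ccontr)
  assume "x @ [i] \<notin> T"
  have "j < i" if "x @ [j] \<in> T" for j
  proof (rule ccontr)
    assume "\<not> j < i"
    then have "i < j"
      using that \<open>x @ [i] \<notin> T\<close> by (cases "i = j") auto
    then show False
      using that \<open>x @ [i] \<notin> T\<close> assms(1) unfolding ordered_tree_def by blast
  qed
  then have "{j. x @ [j] \<in> T} \<subseteq> {..<i}"
    by blast
  then have "num_children T x \<le> i"
    unfolding num_children_def by (metis card_lessThan card_mono finite_lessThan)
  then show False
    using assms(2) by simp
qed

lemma infinite_ordered_tree_root_has_child: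
  assumes "ordered_tree T" "infinite T"
  shows "0 < num_children T []"
proof (rule ccontr)
  assume "\<not> 0 < num_children T []"
  moreover have "finite {i. [] @ [i] \<in> T}"
    using assms(1) unfolding ordered_tree_def by blast
  ultimately have no_child: "[i] \<notin> T" for i
    unfolding num_children_def by auto
  have "T \<subseteq> {[]}"
  proof
    fix x assume "x \<in> T"
    then show "x \<in> {[]}"
      using no_child ordered_tree_prefix_closed[OF assms(1), of "[hd x]" "tl x"]
      by (cases x) auto
  qed
  then show False
    using assms(2) finite_subset by blast
qed

lemma lbrw_step_nonroot:
  assumes "x \<noteq> []"
  shows "lbrw_step T lam x = bind_pmf (bernoulli_pmf (lam / (lam + real (num_children T x))))
     (\<lambda>b. if b then return_pmf (butlast x)
          else pmf_of_set ((\<lambda>i. x @ [i]) ` {..<num_children T x}))"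
proof -
  have children: "{x @ [i] |i. i < num_children T x} = (\<lambda>i. x @ [i]) ` {..<num_children T x}"
    by auto
  show ?thesis
    using assms unfolding lbrw_step_def children by simp
qed

lemma set_pmf_lbrw_step:
  assumes "lam > 0" and "x \<noteq> [] \<or> 0 < num_children T []"
    and "y \<in> set_pmf (lbrw_step T lam x)"
  shows "(x \<noteq> [] \<and> y = butlast x) \<or> (\<exists>i<num_children T x. y = x @ [i])"
proof -
  have children: "set_pmf (pmf_of_set ((\<lambda>i. u @ [i]) ` {..<K})) = (\<lambda>i. u @ [i]) ` {..<K}"
    if "0 < K" for u and K :: nat
    by (rule set_pmf_of_set) (use that in auto)
  show ?thesis
  proof (cases "x = []")
    case True
    have "{[i] |i. i < num_children T []} = (\<lambda>i. [i]) ` {..<num_children T []}"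
      by auto
    then have "lbrw_step T lam [] = pmf_of_set ((\<lambda>i. [i]) ` {..<num_children T []})"
      unfolding lbrw_step_def by simp
    then show ?thesis
      using True assms(2,3) children[of "num_children T []" "[]"] by auto
  next
    case False
    define K where "K = num_children T x"
    from assms(3) obtain b where
      b: "b \<in> set_pmf (bernoulli_pmf (lam / (lam + real K)))" and
      y: "y \<in> set_pmf (if b then return_pmf (butlast x) else pmf_of_set ((\<lambda>i. x @ [i]) ` {..<K}))"
      unfolding lbrw_step_nonroot[OF False] K_def by auto
    show ?thesis
    proof (cases b)
      case True
      then show ?thesis
        using y False by simp
    next
      case b_False: False
      have "0 < K"
        using b b_False assms(1) by (auto simp: set_pmf_eq)
      then show ?thesis
        using y b_False children by (auto simp: K_def)
    qed
  qed
qed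

lemma lbrw_step_tree_adj:
  assumes "ordered_tree T" "infinite T" "lam > 0" "x \<in> T" "y \<in> set_pmf (lbrw_step T lam x)"
  shows "tree_adj T x y"
proof -
  have "(x \<noteq> [] \<and> y = butlast x) \<or> (\<exists>i<num_children T x. y = x @ [i])"
    using infinite_ordered_tree_root_has_child[OF assms(1,2)]
    by (intro set_pmf_lbrw_step[OF assms(3) _ assms(5)]) simp
  then show ?thesis
  proof (elim disjE exE conjE)
    assume "x \<noteq> []" "y = butlast x"
    then have "x = y @ [last x]"
      by simp
    then show ?thesis
      using assms(1,4) ordered_tree_prefix_closed unfolding tree_adj_def by metis
  next
    fix i assume "i < num_children T x" "y = x @ [i]"
    then show ?thesis
      using assms(1,4) ordered_tree_child_in_tree unfolding tree_adj_def by blast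
  qed
qed

lemma integral_return_pmf: "measure_pmf.expectation (return_pmf x) f = (f x :: real)"
  by (simp add: integral_measure_pmf_real[where A="{x}"])

lemma lbrw_step_expectation:
  fixes f :: "nat list \<Rightarrow> real"
  assumes "x \<noteq> []" "lam > 0" "\<And>y. 0 \<le> f y" "\<And>y. f y \<le> B"
  shows "measure_pmf.expectation (lbrw_step T lam x) f =
     (lam * f (butlast x) + (\<Sum>i<num_children T x. f (x @ [i]))) / (lam + num_children T x)"
proof -
  define K where "K = num_children T x"
  define p where "p = lam / (lam + real K)"
  have p: "0 \<le> p" "p \<le> 1" "1 - p = K / (lam + K)"
    using assms(2) by (auto simp: p_def field_simps)
  have children: "measure_pmf.expectation (pmf_of_set ((\<lambda>i. x @ [i]) ` {..<K})) f * K =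
      (\<Sum>i<K. f (x @ [i]))"
  proof (cases "K = 0")
    case False
    have inj: "inj_on (\<lambda>i. x @ [i]) {..<K}"
      by (simp add: inj_on_def)
    have "measure_pmf.expectation (pmf_of_set ((\<lambda>i. x @ [i]) ` {..<K})) f =
        sum f ((\<lambda>i. x @ [i]) ` {..<K}) / card ((\<lambda>i. x @ [i]) ` {..<K})"
      by (rule integral_pmf_of_set) (use False in auto)
    then show ?thesis
      using False by (simp add: sum.reindex[OF inj] card_image[OF inj])
  qed simp
  have "measure_pmf.expectation (lbrw_step T lam x) f =
     p * f (butlast x) + (1 - p) * measure_pmf.expectation (pmf_of_set ((\<lambda>i. x @ [i]) ` {..<K})) f"
    unfolding lbrw_step_nonroot[OF assms(1)] integral_bind_pmf[OF assms(3,4)]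
    using p by (simp add: K_def p_def integral_return_pmf mult.commute)
  also have "\<dots> = (lam * f (butlast x) + (\<Sum>i<K. f (x @ [i]))) / (lam + K)"
    unfolding p(3) children[symmetric] by (simp add: p_def add_divide_distrib mult.commute)
  finally show ?thesis
    by (simp add: K_def)
qed

lemma set_pmf_lbrw_path:
  assumes "ordered_tree T" "infinite T" "lam > 0" "set_pmf mu \<subseteq> T"
    and "ys \<in> set_pmf (lbrw_path T lam mu n)"
  shows "length ys = Suc n" "\<And>i. i < n \<Longrightarrow> tree_adj T (ys ! i) (ys ! Suc i)"
proof -
  note walk = set_pmf_chain_path[OF assms(5)[unfolded lbrw_path_eq_chain_path]]
  show "length ys = Suc n"
    by (fact walk(1))
  have adj: "tree_adj T (ys ! i) (ys ! Suc i)" if "i < n" for i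
    using that
  proof (induction i)
    case 0
    have "ys ! 0 \<in> T"
      using walk(2) assms(4) by (simp add: subset_iff)
    then show ?case
      using walk(3)[OF 0] by (intro lbrw_step_tree_adj[OF assms(1-3)]) simp_all
  next
    case (Suc i)
    then have "ys ! Suc i \<in> T"
      unfolding tree_adj_def by simp
    then show ?case
      using walk(3)[OF Suc.prems] by (intro lbrw_step_tree_adj[OF assms(1-3)])
  qed
  then show "\<And>i. i < n \<Longrightarrow> tree_adj T (ys ! i) (ys ! Suc i)" .
qed

section \<open>Common ancestors and the graph distance\<close>

definition meet_height :: "'a list \<Rightarrow> 'a list \<Rightarrow> nat" where
  "meet_height x y = length (longest_common_prefix x y)"

lemma meet_height_le_length: "meet_height x y \<le> length x" "meet_height x y \<le> length y"
  unfolding meet_height_def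
  by (simp_all add: prefix_length_le longest_common_prefix_prefix1 longest_common_prefix_prefix2)

lemma take_meet_height:
  assumes "j \<le> meet_height x y"
  shows "take j x = take j y"
proof -
  define p where "p = longest_common_prefix x y"
  have "take (length p) x = p" "take (length p) y = p"
    unfolding p_def
    by (metis append_eq_conv_conj longest_common_prefix_prefix1 longest_common_prefix_prefix2 prefixE)+
  then show ?thesis
    using assms unfolding meet_height_def p_def[symmetric] by (metis min.absorb1 take_take)
qed

lemma meet_height_self [simp]: "meet_height x x = length x"
proof -
  have "longest_common_prefix x x = x"
    by (induction x) auto
  then show ?thesis
    by (simp add: meet_height_def)
qed

lemma meet_height_snoc:
  "meet_height (u @ [i]) z =
     (if meet_height u z = length u \<and> length u < length z \<and> z ! length u = i
      then Suc (length u) else meet_height u z)"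
  unfolding meet_height_def
proof (induction u arbitrary: z)
  case Nil
  then show ?case by (cases z) auto
next
  case (Cons a u)
  then show ?case by (cases z) auto
qed

lemma meet_height_eq_length_imp_prefix:
  assumes "meet_height x z = length x"
  shows "prefix x z"
  using take_meet_height[of "length x" x z] assms by (metis order_refl take_all take_is_prefix)

definition tree_dist :: "'a list \<Rightarrow> 'a list \<Rightarrow> nat" where
  "tree_dist x y = length x + length y - 2 * meet_height x y"

lemma tree_dist_snoc_le:
  "tree_dist (u @ [i]) v \<le> Suc (tree_dist u v)" "tree_dist u v \<le> Suc (tree_dist (u @ [i]) v)"
  unfolding tree_dist_def meet_height_snoc using meet_height_le_length[of u v] by auto

lemma tree_dist_tree_adj_le:
  assumes "tree_adj T x y"
  shows "tree_dist x v \<le> Suc (tree_dist y v)"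
  using assms unfolding tree_adj_def by (auto simp: tree_dist_snoc_le)

lemma tree_dist_le_tree_path:
  assumes "tree_path T ps"
  shows "tree_dist (hd ps) (last ps) \<le> length ps - 1"
  using assms
proof (induction ps)
  case (Cons a ps)
  show ?case
  proof (cases "ps = []")
    case True
    then show ?thesis
      by (simp add: tree_dist_def)
  next
    case False
    have "tree_adj T ((a # ps) ! 0) ((a # ps) ! 1)"
      using Cons.prems False unfolding tree_path_def by fastforce
    then have adj: "tree_adj T a (hd ps)"
      using False by (simp add: hd_conv_nth)
    have "tree_path T ps"
      using Cons.prems False unfolding tree_path_def by fastforce
    then have "tree_dist (hd ps) (last ps) \<le> length ps - 1"
      by (rule Cons.IH)
    then show ?thesis
      using tree_dist_tree_adj_le[OF adj, of "last ps"] False by (cases ps) auto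
  qed
qed (simp add: tree_path_def)

lemma tree_dist_le_d_gr:
  assumes "tree_path T ps" "hd ps = x" "last ps = y"
  shows "tree_dist x y \<le> d_gr T x y"
proof -
  let ?P = "\<lambda>n. \<exists>ps. tree_path T ps \<and> hd ps = x \<and> last ps = y \<and> length ps = Suc n"
  have "?P (length ps - 1)"
    using assms by (intro exI[of _ ps]) (auto simp: tree_path_def)
  then have "?P (d_gr T x y)"
    unfolding d_gr_def by (rule LeastI)
  then show ?thesis
    using tree_dist_le_tree_path by fastforce
qed

lemma tree_dist_le_d_gr_walk:
  assumes adj: "\<And>i. n1 \<le> i \<Longrightarrow> i < n2 \<Longrightarrow> tree_adj T (Y i) (Y (Suc i))" and "n1 < n2"
  shows "tree_dist (Y n1) (Y n2) \<le> d_gr T (Y n1) (Y n2)"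
proof (rule tree_dist_le_d_gr)
  let ?ps = "map Y [n1..<Suc n2]"
  have nth_ps: "?ps ! k = Y (n1 + k)" if "k \<le> n2 - n1" for k
    using that \<open>n1 < n2\<close> by (simp add: nth_map_upt del: upt_Suc)
  have "Y i \<in> T" if "n1 \<le> i" "i \<le> n2" for i
    using adj[of i] adj[of "i - 1"] that \<open>n1 < n2\<close> unfolding tree_adj_def
    by (cases "i < n2") (auto simp: Suc_diff_1)
  then show "tree_path T ?ps"
    unfolding tree_path_def using \<open>n1 < n2\<close> adj by (auto simp: nth_ps simp del: upt_Suc)
  show "hd ?ps = Y n1" "last ?ps = Y n2"
    using \<open>n1 < n2\<close> by (simp_all add: hd_map last_map del: upt_Suc)
qed

section \<open>A superharmonic potential\<close>

definition geom_sum :: "real \<Rightarrow> nat \<Rightarrow> real" where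
  "geom_sum lam j = (\<Sum>i<j. lam ^ i)"

lemma geom_sum_simps [simp]:
  "geom_sum lam 0 = 0" "geom_sum lam (Suc j) = geom_sum lam j + lam ^ j"
  by (simp_all add: geom_sum_def)

lemma geom_sum_nonneg: "0 \<le> lam \<Longrightarrow> 0 \<le> geom_sum lam j"
  by (simp add: geom_sum_def sum_nonneg)

lemma geom_sum_mono: "0 \<le> lam \<Longrightarrow> j \<le> j' \<Longrightarrow> geom_sum lam j \<le> geom_sum lam j'"
  unfolding geom_sum_def by (rule sum_mono2) auto

lemma geom_sum_closed_form: "lam \<noteq> 1 \<Longrightarrow> geom_sum lam j = (lam ^ j - 1) / (lam - 1)"
  unfolding geom_sum_def by (simp add: sum_gp_strict divide_simps) (simp add: algebra_simps)

lemma geom_sum_le_1: "j \<le> 1 \<Longrightarrow> geom_sum lam j \<le> 1"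
  by (cases j) auto

lemma geom_sum_ge_1: "0 \<le> lam \<Longrightarrow> 1 \<le> j \<Longrightarrow> 1 \<le> geom_sum lam j"
  using geom_sum_mono[of lam 1 j] by simp

text \<open>Only the progress of x from height a along the ray towards z matters, and on that ray
  the walk is \<lambda>-biased towards the root, for which j \<mapsto> \<Sum>i<j. \<lambda>^i is harmonic.\<close>

definition reach_potential :: "real \<Rightarrow> nat \<Rightarrow> 'a list \<Rightarrow> 'a list \<Rightarrow> real" where
  "reach_potential lam a z x =
     (if a < length x \<and> a \<le> meet_height x z then geom_sum lam (meet_height x z - a) else 0)"

lemma reach_potential_nonneg: "0 \<le> lam \<Longrightarrow> 0 \<le> reach_potential lam a z x"
  by (simp add: reach_potential_def geom_sum_nonneg)

lemma reach_potential_le: "0 \<le> lam \<Longrightarrow> reach_potential lam a z x \<le> geom_sum lam (length z - a)"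
  unfolding reach_potential_def using meet_height_le_length(2)[of x z]
  by (auto simp: geom_sum_nonneg intro!: geom_sum_mono)

lemma reach_potential_target: "a < length z \<Longrightarrow> reach_potential lam a z z = geom_sum lam (length z - a)"
  by (simp add: reach_potential_def)

lemma reach_potential_snoc:
  assumes "a < length x"
  shows "reach_potential lam a z (x @ [i]) =
    (if meet_height x z = length x \<and> length x < length z \<and> z ! length x = i
     then geom_sum lam (Suc (length x) - a) else reach_potential lam a z x)"
  using assms unfolding reach_potential_def meet_height_snoc by auto

lemma reach_potential_butlast:
  assumes "0 \<le> lam" "a < length x"
  shows "reach_potential lam a z (butlast x) \<le>
    (if meet_height x z = length x then geom_sum lam (length x - 1 - a) else reach_potential lam a z x)"
proof -
  define b where "b = butlast x"
  have "x \<noteq> []"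
    using assms(2) by auto
  then have x: "x = b @ [last x]" and length_x: "length x = Suc (length b)"
    unfolding b_def by simp_all
  note meet = meet_height_snoc[of b "last x" z, folded x]
  have meet_b: "meet_height b z \<le> length b"
    by (rule meet_height_le_length)
  show ?thesis
  proof (cases "meet_height x z = length x")
    case True
    then have "meet_height b z = length b"
      using meet meet_b length_x by (auto split: if_splits)
    then show ?thesis
      unfolding b_def[symmetric] using True length_x assms(1)
      by (simp add: reach_potential_def geom_sum_nonneg)
  next
    case False
    then have "meet_height b z = meet_height x z"
      using meet length_x by (auto split: if_splits)
    then show ?thesis
      unfolding b_def[symmetric] using False length_x assms
      by (simp add: reach_potential_def geom_sum_nonneg)
  qed
qed

lemma reach_potential_superharmonic:
  fixes x z :: "nat list" and K :: nat
  assumes "0 \<le> lam" "a < length x" "x \<noteq> z"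
  shows "lam * reach_potential lam a z (butlast x) + (\<Sum>i<K. reach_potential lam a z (x @ [i]))
    \<le> (lam + K) * reach_potential lam a z x"
proof (cases "meet_height x z = length x")
  case True
  define j where "j = length x - a"
  have "strict_prefix x z"
    using meet_height_eq_length_imp_prefix[OF True] assms(3) by auto
  then have x_below_z: "length x < length z"
    by (rule prefix_length_less)
  have potential_x: "reach_potential lam a z x = geom_sum lam j"
    using True assms(2) by (simp add: reach_potential_def j_def)
  have j: "j = Suc (j - 1)"
    using assms(2) by (simp add: j_def)
  have "(\<Sum>i<K. reach_potential lam a z (x @ [i])) \<le>
      (\<Sum>i<K. geom_sum lam j + (if i = z ! length x then lam ^ j else 0))"
    using True x_below_z assms(2)
    by (intro sum_mono) (simp add: reach_potential_snoc potential_x j_def Suc_diff_le)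
  also have "\<dots> \<le> K * geom_sum lam j + lam ^ j"
    using assms(1) by (simp add: sum.distrib sum.delta)
  finally have children: "(\<Sum>i<K. reach_potential lam a z (x @ [i])) \<le> K * geom_sum lam j + lam ^ j" .
  have parent: "reach_potential lam a z (butlast x) \<le> geom_sum lam (j - 1)"
    using reach_potential_butlast[OF assms(1,2), of z] True by (simp add: j_def)
  have "lam * geom_sum lam (j - 1) + lam ^ j = lam * geom_sum lam j"
    by (subst (2 3) j) (simp add: algebra_simps)
  then show ?thesis
    using children mult_left_mono[OF parent assms(1)] by (simp add: potential_x algebra_simps)
next
  case False
  have "(\<Sum>i<K. reach_potential lam a z (x @ [i])) = K * reach_potential lam a z x"
    using False assms(2) by (simp add: reach_potential_snoc)
  moreover have "reach_potential lam a z (butlast x) \<le> reach_potential lam a z x"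
    using reach_potential_butlast[OF assms(1,2), of z] False by simp
  ultimately show ?thesis
    using assms(1) by (simp add: algebra_simps mult_left_mono)
qed

lemma lbrw_step_reach_potential_superharmonic:
  assumes "lam > 0" "a < length x" "x \<noteq> z"
  shows "measure_pmf.expectation (lbrw_step T lam x) (reach_potential lam a z) \<le> reach_potential lam a z x"
proof -
  have "x \<noteq> []"
    using assms(2) by auto
  then have "measure_pmf.expectation (lbrw_step T lam x) (reach_potential lam a z) =
      (lam * reach_potential lam a z (butlast x) + (\<Sum>i<num_children T x. reach_potential lam a z (x @ [i])))
        / (lam + num_children T x)"
    by (intro lbrw_step_expectation[where B="geom_sum lam (length z - a)"]
        reach_potential_nonneg reach_potential_le) (use assms(1) in auto)
  also have "\<dots> \<le> reach_potential lam a z x"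
    using reach_potential_superharmonic[of lam a x z "num_children T x"] assms
    by (simp add: divide_le_eq add_pos_nonneg mult.commute)
  finally show ?thesis .
qed

lemma reach_potential_lbrw_step_le_1:
  assumes "ordered_tree T" "infinite T" "lam > 0" "y \<in> set_pmf (lbrw_step T lam w)"
  shows "reach_potential lam (length w) z y \<le> 1"
proof -
  have "(w \<noteq> [] \<and> y = butlast w) \<or> (\<exists>i<num_children T w. y = w @ [i])"
    using infinite_ordered_tree_root_has_child[OF assms(1,2)]
    by (intro set_pmf_lbrw_step[OF assms(3) _ assms(4)]) simp
  then have "length y \<le> Suc (length w)"
    by auto
  then show ?thesis
    using meet_height_le_length(1)[of y z] by (simp add: reach_potential_def geom_sum_le_1)
qed

lemma lbrw_path_reach_before_return_prob_le:
  assumes T: "ordered_tree T" "infinite T" and lam: "lam > 1"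
    and l: "1 \<le> l" and z: "length z = length w + l"
  shows "measure_pmf.prob (lbrw_path T lam (return_pmf w) n)
           {zs. \<exists>t\<in>{1..n}. zs ! t = z \<and> (\<forall>s\<in>{1..t}. length w < length (zs ! s))}
         \<le> (lam - 1) / (lam ^ l - 1)"
proof -
  define a where "a = length w"
  define f where "f y = reach_potential lam a z y / geom_sum lam l" for y
  have scale: "1 \<le> geom_sum lam l"
    using lam l by (intro geom_sum_ge_1) auto
  have f_nonneg: "0 \<le> f y" for y
    using lam scale by (simp add: f_def reach_potential_nonneg)
  have f_le_1: "f y \<le> 1" for y
    using lam scale reach_potential_le[of lam a z y] by (simp add: f_def z a_def)
  have f_target: "1 \<le> f z"
    using l scale by (simp add: f_def reach_potential_target z a_def)
  have f_superharmonic: "measure_pmf.expectation (lbrw_step T lam y) f \<le> f y"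
    if "y \<in> {y. a < length y}" "y \<noteq> z" for y
  proof -
    have "measure_pmf.expectation (lbrw_step T lam y) f =
        measure_pmf.expectation (lbrw_step T lam y) (reach_potential lam a z) / geom_sum lam l"
      unfolding f_def by (rule integral_divide_zero)
    then show ?thesis
      using lbrw_step_reach_potential_superharmonic[of lam a y z T] that lam scale
      by (simp add: f_def divide_right_mono)
  qed
  have f_after_step: "f y \<le> 1 / geom_sum lam l" if "y \<in> set_pmf (lbrw_step T lam w)" for y
    using reach_potential_lbrw_step_le_1[OF T _ that, of z] lam scale
    by (simp add: f_def a_def divide_right_mono)
  have "measure_pmf.prob (lbrw_path T lam (return_pmf w) n)
           {zs. \<exists>t\<in>{1..n}. zs ! t = z \<and> (\<forall>s\<in>{1..t}. zs ! s \<in> {y. a < length y})}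
         \<le> measure_pmf.expectation (lbrw_step T lam w) f"
    unfolding lbrw_path_eq_chain_path
    by (rule measure_chain_path_hit_after_step_le[OF f_nonneg f_le_1 f_target f_superharmonic])
  also have "\<dots> \<le> measure_pmf.expectation (lbrw_step T lam w) (\<lambda>_. 1 / geom_sum lam l)"
    using f_nonneg f_le_1 scale
    by (intro integral_pmf_mono[where B=1 and C="1 / geom_sum lam l"] f_after_step) auto
  also have "\<dots> = (lam - 1) / (lam ^ l - 1)"
    using lam by (simp add: geom_sum_closed_form)
  finally show ?thesis
    by (simp add: a_def)
qed

section \<open>Climbing excursions\<close>

lemma walk_visits_prefix:
  assumes adj: "\<And>i. m \<le> i \<Longrightarrow> i < n \<Longrightarrow> tree_adj T (Y i) (Y (Suc i))"
    and below: "length (Y m) < length z" and "prefix z (Y n)" "m \<le> n"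
  shows "\<exists>t\<in>{m<..n}. Y t = z"
  using assms(3,4) adj
proof (induction n)
  case 0
  then show ?case
    using below prefix_length_le by fastforce
next
  case (Suc n)
  have "m \<noteq> Suc n"
    using Suc.prems(1) below prefix_length_le by fastforce
  then have m: "m \<le> n"
    using Suc.prems(2) by simp
  show ?case
  proof (cases "Y (Suc n) = z")
    case True
    then show ?thesis
      using m by auto
  next
    case False
    have "prefix z (Y n)"
      using Suc.prems(3)[OF m lessI] Suc.prems(1) False
      unfolding tree_adj_def by (auto simp: prefix_snoc)
    then have "\<exists>t\<in>{m<..n}. Y t = z"
      using Suc.IH m Suc.prems(3) by simp
    then show ?thesis
      by auto
  qed
qed

definition climbs_to_ancestor :: "nat \<Rightarrow> nat \<Rightarrow> nat \<Rightarrow> nat \<Rightarrow> (nat \<Rightarrow> 'a list) \<Rightarrow> bool" where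
  "climbs_to_ancestor l n1 m n Y \<longleftrightarrow> length (Y m) + l \<le> length (Y n1) \<and>
     (\<exists>t\<in>{m<..n}. Y t = take (length (Y m) + l) (Y n1) \<and> (\<forall>s\<in>{m<..t}. length (Y m) < length (Y s)))"

lemma last_time_at_min:
  fixes g :: "nat \<Rightarrow> 'b :: linorder"
  assumes "n1 \<le> n2"
  obtains m where "n1 \<le> m" "m \<le> n2" "\<And>s. n1 \<le> s \<Longrightarrow> s \<le> n2 \<Longrightarrow> g m \<le> g s"
    "\<And>s. m < s \<Longrightarrow> s \<le> n2 \<Longrightarrow> g m < g s"
proof -
  define h where "h = Min (g ` {n1..n2})"
  have h_le: "h \<le> g s" if "n1 \<le> s" "s \<le> n2" for s
    unfolding h_def using that by (intro Min_le) auto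
  have "h \<in> g ` {n1..n2}"
    unfolding h_def using assms by (intro Min_in) auto
  then have at_min: "{m. n1 \<le> m \<and> m \<le> n2 \<and> g m = h} \<noteq> {}"
    by auto
  have fin: "finite {m. n1 \<le> m \<and> m \<le> n2 \<and> g m = h}"
    by (rule finite_subset[of _ "{..n2}"]) auto
  define m where "m = Max {m. n1 \<le> m \<and> m \<le> n2 \<and> g m = h}"
  have m: "n1 \<le> m" "m \<le> n2" "g m = h"
    using Max_in[OF fin at_min] unfolding m_def by auto
  have "g m < g s" if "m < s" "s \<le> n2" for s
  proof -
    have "s \<notin> {m. n1 \<le> m \<and> m \<le> n2 \<and> g m = h}"
      using Max_ge[OF fin, of s, folded m_def] that(1) by auto
    then show ?thesis
      using h_le[of s] that m by fastforce
  qed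
  then show ?thesis
    using that m h_le by auto
qed

lemma climbs_to_ancestor_if_meet_height:
  assumes adj: "\<And>i. n1 \<le> i \<Longrightarrow> i < n2 \<Longrightarrow> tree_adj T (Y i) (Y (Suc i))"
    and "n1 < n2" "1 \<le> l"
    and high: "Min {length (Y n) | n. n1 \<le> n \<and> n \<le> n2} + l \<le> meet_height (Y n1) (Y n2)"
  shows "\<exists>m\<in>{n1..<n2}. climbs_to_ancestor l n1 m n2 Y"
proof -
  obtain m where m: "n1 \<le> m" "m \<le> n2"
    and min: "\<And>s. n1 \<le> s \<Longrightarrow> s \<le> n2 \<Longrightarrow> length (Y m) \<le> length (Y s)"
    and above: "\<And>s. m < s \<Longrightarrow> s \<le> n2 \<Longrightarrow> length (Y m) < length (Y s)"
    using last_time_at_min[of n1 n2 "\<lambda>n. length (Y n)"] \<open>n1 < n2\<close> by auto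
  define h where "h = length (Y m)"
  have "Min {length (Y n) | n. n1 \<le> n \<and> n \<le> n2} = h"
    unfolding h_def using m min by (intro Min_eqI) auto
  then have high: "h + l \<le> meet_height (Y n1) (Y n2)"
    using high by simp
  define z where "z = take (h + l) (Y n1)"
  have "h + l \<le> length (Y n1)" "h + l \<le> length (Y n2)"
    using high meet_height_le_length by (metis le_trans)+
  then have z: "length z = h + l" "prefix z (Y n2)"
    using take_meet_height[OF high] take_is_prefix unfolding z_def by auto
  have "m \<noteq> n2"
    using \<open>h + l \<le> length (Y n2)\<close> \<open>1 \<le> l\<close> by (auto simp: h_def)
  then obtain t where t: "t \<in> {m<..n2}" "Y t = z"
    using walk_visits_prefix[of m n2 T Y z] adj m z \<open>1 \<le> l\<close> by (auto simp: h_def)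
  have "climbs_to_ancestor l n1 m n2 Y"
    unfolding climbs_to_ancestor_def
    using t above \<open>h + l \<le> length (Y n1)\<close> by (auto simp: z_def h_def)
  then show ?thesis
    using m \<open>m \<noteq> n2\<close> by auto
qed

lemma climbs_to_ancestor_if_detour:
  assumes adj: "\<And>i. n1 \<le> i \<Longrightarrow> i < n2 \<Longrightarrow> tree_adj T (Y i) (Y (Suc i))"
    and "n1 < n2" "1 \<le> l"
    and detour: "2 * real l + real (d_gr T (Y n1) (Y n2)) \<le>
      real (height (Y n1)) + real (height (Y n2)) - 2 * real (Min {height (Y n) | n. n1 \<le> n \<and> n \<le> n2})"
  shows "\<exists>m\<in>{n1..<n2}. climbs_to_ancestor l n1 m n2 Y"
proof (rule climbs_to_ancestor_if_meet_height[where T=T and Y=Y, OF adj \<open>n1 < n2\<close> \<open>1 \<le> l\<close>])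
  have "tree_dist (Y n1) (Y n2) \<le> d_gr T (Y n1) (Y n2)"
    by (rule tree_dist_le_d_gr_walk[where T=T and Y=Y, OF adj \<open>n1 < n2\<close>])
  then show "Min {length (Y n) | n. n1 \<le> n \<and> n \<le> n2} + l \<le> meet_height (Y n1) (Y n2)"
    using detour meet_height_le_length[of "Y n1" "Y n2"]
    unfolding tree_dist_def height_def by linarith
qed

lemma nth_append_tl_shift:
  assumes "length ys = Suc m" "zs ! 0 = last ys" "s < length zs"
  shows "(ys @ tl zs) ! (m + s) = zs ! s"
proof (cases s)
  case 0
  then show ?thesis
    using assms by (simp add: nth_append last_conv_nth_Suc)
next
  case (Suc s')
  then show ?thesis
    using assms by (simp add: nth_append nth_tl)
qed

lemma climbs_to_ancestor_append_tl:
  assumes ys: "length ys = Suc m" "n1 \<le> m" and zs: "length zs = Suc k" "zs ! 0 = last ys"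
    and climb: "climbs_to_ancestor l n1 m (m + k) ((!) (ys @ tl zs))"
  shows "length (last ys) + l \<le> length (ys ! n1)"
    and "\<exists>t\<in>{1..k}. zs ! t = take (length (last ys) + l) (ys ! n1) \<and>
           (\<forall>s\<in>{1..t}. length (last ys) < length (zs ! s))"
proof -
  have past: "(ys @ tl zs) ! m = last ys" "(ys @ tl zs) ! n1 = ys ! n1"
    using ys by (simp_all add: nth_append last_conv_nth_Suc)
  have future: "(ys @ tl zs) ! (m + s) = zs ! s" if "s \<le> k" for s
    using nth_append_tl_shift[OF ys(1)] zs that by simp
  show "length (last ys) + l \<le> length (ys ! n1)"
    using climb by (simp add: climbs_to_ancestor_def past)
  from climb obtain t where t: "t \<in> {m<..m + k}"
    "(ys @ tl zs) ! t = take (length (last ys) + l) (ys ! n1)"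
    "\<forall>s\<in>{m<..t}. length (last ys) < length ((ys @ tl zs) ! s)"
    by (auto simp: climbs_to_ancestor_def past)
  have "length (last ys) < length (zs ! s)" if "s \<in> {1..t - m}" for s
  proof -
    have "m + s \<in> {m<..t}" "s \<le> k"
      using that t(1) by auto
    then show ?thesis
      using t(3) future by fastforce
  qed
  moreover have "zs ! (t - m) = take (length (last ys) + l) (ys ! n1)"
    using t(1,2) future[of "t - m"] by auto
  ultimately show "\<exists>t\<in>{1..k}. zs ! t = take (length (last ys) + l) (ys ! n1) \<and>
      (\<forall>s\<in>{1..t}. length (last ys) < length (zs ! s))"
    using t(1) by (auto intro!: bexI[of _ "t - m"])
qed

lemma lbrw_path_climbs_to_ancestor_prob_le:
  assumes T: "ordered_tree T" "infinite T" and lam: "lam > 1" and l: "1 \<le> l"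
    and m: "n1 \<le> m" "m < n"
  shows "measure_pmf.prob (lbrw_path T lam mu n) {ys. climbs_to_ancestor l n1 m n ((!) ys)}
    \<le> (lam - 1) / (lam ^ l - 1)"
proof -
  define k where "k = n - m"
  have n: "n = m + k"
    using m by (simp add: k_def)
  show ?thesis
    unfolding n lbrw_path_eq_chain_path
  proof (rule measure_chain_path_add_le)
    fix ys assume "ys \<in> set_pmf (chain_path (lbrw_step T lam) mu m)"
    then have ys: "length ys = Suc m"
      by (rule set_pmf_chain_path)
    define w where "w = last ys"
    define z where "z = take (length w + l) (ys ! n1)"
    let ?Q = "chain_path (lbrw_step T lam) (return_pmf w) k"
    let ?E = "{zs. \<exists>t\<in>{1..k}. zs ! t = z \<and> (\<forall>s\<in>{1..t}. length w < length (zs ! s))}"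
    let ?climb = "{zs. ys @ tl zs \<in> {ys. climbs_to_ancestor l n1 m (m + k) ((!) ys)}}"
    have "measure_pmf.prob ?Q ?climb \<le> measure_pmf.prob ?Q (?E \<inter> {_. length w + l \<le> length (ys ! n1)})"
    proof (rule measure_pmf_mono_on_set_pmf)
      fix zs assume climb: "zs \<in> ?climb" and future: "zs \<in> set_pmf ?Q"
      have "length zs = Suc k" "zs ! 0 = last ys"
        using set_pmf_chain_path(1,2)[OF future] by (auto simp: w_def)
      then show "zs \<in> ?E \<inter> {_. length w + l \<le> length (ys ! n1)}"
        using climbs_to_ancestor_append_tl[OF ys m(1)] climb by (auto simp: w_def z_def)
    qed
    also have "\<dots> \<le> (lam - 1) / (lam ^ l - 1)"
    proof (cases "length w + l \<le> length (ys ! n1)")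
      case True
      then show ?thesis
        using lbrw_path_reach_before_return_prob_le[OF T lam l, of z w k]
        by (simp add: z_def lbrw_path_eq_chain_path)
    next
      case False
      then show ?thesis
        using lam by (simp add: one_le_power)
    qed
    finally show "measure_pmf.prob ?Q ?climb \<le> (lam - 1) / (lam ^ l - 1)" .
  qed
qed

text \<open>Infiniteness of T only ensures
  that the root has a child, so that the first step from the root is not the junk value
  of pmf_of_set applied to the empty set.\<close>

theorem lemma3p17:
  fixes T :: "nat list set" and lam :: real and mu :: "nat list pmf"
    and l n1 n2 :: nat
  assumes "ordered_tree T" and "infinite T"
    and "lam > 1"
    and "set_pmf mu \<subseteq> T"
    and "lbrw_recurrent T lam"
    and "l \<ge> 1"
    and "n1 < n2"
  shows "measure_pmf.prob (lbrw_path T lam mu n2)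
           {ys. real (height (ys ! n1)) + real (height (ys ! n2))
                  - 2 * real (Min {height (ys ! n) | n. n1 \<le> n \<and> n \<le> n2})
                \<ge> 2 * real l + real (d_gr T (ys ! n1) (ys ! n2))}
         \<le> real (n2 - n1) * (lam - 1) / (lam ^ l - 1)"
proof -
  have lam0: "lam > 0"
    using assms(3) by simp
  let ?P = "lbrw_path T lam mu n2"
  let ?climb = "\<lambda>m. {ys. climbs_to_ancestor l n1 m n2 ((!) ys)}"
  have climbs: "ys \<in> (\<Union>m\<in>{n1..<n2}. ?climb m)"
    if "ys \<in> set_pmf ?P" and "2 * real l + real (d_gr T (ys ! n1) (ys ! n2)) \<le>
      real (height (ys ! n1)) + real (height (ys ! n2))
        - 2 * real (Min {height (ys ! n) | n. n1 \<le> n \<and> n \<le> n2})"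
    for ys
    using climbs_to_ancestor_if_detour[of n1 n2 T "(!) ys" l] that(2) assms(6,7)
      set_pmf_lbrw_path(2)[OF assms(1,2) lam0 assms(4) that(1)] by auto
  have "measure_pmf.prob ?P (\<Union>m\<in>{n1..<n2}. ?climb m) \<le>
      (\<Sum>m\<in>{n1..<n2}. measure_pmf.prob ?P (?climb m))"
    by (rule measure_pmf.finite_measure_subadditive_finite) auto
  also have "\<dots> \<le> (\<Sum>m\<in>{n1..<n2}. (lam - 1) / (lam ^ l - 1))"
    using lbrw_path_climbs_to_ancestor_prob_le[OF assms(1-3,6)] by (intro sum_mono) auto
  finally have union_bound:
    "measure_pmf.prob ?P (\<Union>m\<in>{n1..<n2}. ?climb m) \<le> real (n2 - n1) * (lam - 1) / (lam ^ l - 1)"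
    by simp
  show ?thesis
    by (rule order_trans[OF measure_pmf_mono_on_set_pmf union_bound]) (use climbs in auto)
qed

end
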